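(* Let $n\ge1$. The friendship graph $f_n$ is $(a,d)$-distance antimagic for some integers $a$ and $d\ge0$ if and only if $n=1$ or $n=2$.
   Context: The friendship graph $f_n$ is obtained by identifying one vertex from each of $n$ copies of $K_3$: its vertices are $x_0,x_1,\dots,x_{2n}$ and, for $i=1,\dots,n$, the vertices $x_0,x_{2i-1},x_{2i}$ form a triangle; these are all the edges. For a graph $G=(V,E)$ with $v=|V|$ and a bijection $f:V\to\{1,\dots,v\}$, the vertex-weight of $x$ is $w(x)=\sum_{y\in N(x)}f(y)$ with $N(x)$ the set of neighbours of $x$. For integers $a$ and $d\ge0$, $f$ is an $(a,d)$-distance antimagic labeling if the multiset of vertex-weights equals $\{a,a+d,\dots,a+(v-1)d\}$; $G$ is $(a,d)$-distance antimagic if it admits such a labeling. *)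

theory Defs
  imports Main "HOL-Library.Multiset"
begin

definition nbhd :: "'v set \<Rightarrow> ('v \<Rightarrow> 'v \<Rightarrow> bool) \<Rightarrow> 'v \<Rightarrow> 'v set" where
  "nbhd V E x = {y \<in> V. E x y}"

definition vweight :: "'v set \<Rightarrow> ('v \<Rightarrow> 'v \<Rightarrow> bool) \<Rightarrow> ('v \<Rightarrow> nat) \<Rightarrow> 'v \<Rightarrow> int" where
  "vweight V E f x = (\<Sum>y\<in>nbhd V E x. int (f y))"

definition distance_antimagic_labeling ::
  "'v set \<Rightarrow> ('v \<Rightarrow> 'v \<Rightarrow> bool) \<Rightarrow> ('v \<Rightarrow> nat) \<Rightarrow> int \<Rightarrow> int \<Rightarrow> bool" where
  "distance_antimagic_labeling V E f a d \<longleftrightarrow>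
     d \<ge> 0 \<and> bij_betw f V {1..card V} \<and>
     image_mset (vweight V E f) (mset_set V)
       = image_mset (\<lambda>k. a + int k * d) (mset [0..<card V])"

definition distance_antimagic ::
  "'v set \<Rightarrow> ('v \<Rightarrow> 'v \<Rightarrow> bool) \<Rightarrow> int \<Rightarrow> int \<Rightarrow> bool" where
  "distance_antimagic V E a d \<longleftrightarrow> (\<exists>f. distance_antimagic_labeling V E f a d)"

text \<open>Friendship graph f_n: vertices x_0,...,x_{2n} encoded as 0..2n;
  x_0 adjacent to all others, and x_{2i-1} adjacent to x_{2i} for i=1..n.\<close>

definition friendship_vertices :: "nat \<Rightarrow> nat set" where
  "friendship_vertices n = {0..2*n}"

definition friendship_adj :: "nat \<Rightarrow> nat \<Rightarrow> nat \<Rightarrow> bool" where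
  "friendship_adj n x y \<longleftrightarrow>
     x \<le> 2*n \<and> y \<le> 2*n \<and> x \<noteq> y \<and>
     (x = 0 \<or> y = 0 \<or> (\<exists>i\<in>{1..n}. {x, y} = {2*i - 1, 2*i}))"

end

theory Submission
  imports Defs
begin

text \<open>A leaf of the friendship graph sees only the centre and its partner, so under a
  labeling with centre label \<open>c\<close> the leaf weights are exactly the numbers \<open>c + j\<close> for the labels
  \<open>j \<noteq> c\<close>. For \<open>n \<ge> 2\<close> two of these are consecutive, which forces \<open>d = 1\<close>; all weights then
  lie in an interval of length \<open>2n\<close>. But the centre weight is the total label sum minus \<open>c\<close>,
  at least \<open>n(2n + 1)\<close>, while some leaf weight is at most \<open>2n + 2\<close>; hence \<open>n \<le> 2\<close>.
  For \<open>n = 1, 2\<close> explicit labelings exist.\<close>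

lemma vweight_image_of_labeling:
  assumes "distance_antimagic_labeling V E f a d" and "finite V"
  shows "vweight V E f ` V = (\<lambda>k. a + int k * d) ` {..<card V}"
proof -
  have "image_mset (vweight V E f) (mset_set V)
          = image_mset (\<lambda>k. a + int k * d) (mset [0..<card V])"
    using assms(1) by (simp add: distance_antimagic_labeling_def)
  from arg_cong[OF this, of set_mset] show ?thesis
    using assms(2) by (simp add: atLeast0LessThan del: mset_upt)
qed

lemma distance_antimagic_labeling_step_eq_1:
  assumes L: "distance_antimagic_labeling V E f a d" and "finite V"
    and "x \<in> V" "y \<in> V" and xy: "vweight V E f y = vweight V E f x + 1"
  shows "d = 1"
proof -
  obtain k l where "vweight V E f x = a + int k * d" "vweight V E f y = a + int l * d"
    using vweight_image_of_labeling[OF assms(1,2)] \<open>x \<in> V\<close> \<open>y \<in> V\<close>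
    by (metis (no_types, lifting) imageE imageI)
  with xy have "(int l - int k) * d = 1" by (simp add: algebra_simps)
  moreover have "d \<ge> 0" using L by (simp add: distance_antimagic_labeling_def)
  ultimately show "d = 1" using zmult_eq_1_iff by force
qed

lemma image_shifted_lessThan: "(\<lambda>k. a + int k) ` {..<N} = {a..a + int N - 1}"
proof -
  have "(\<lambda>k. a + int k) ` {..<N} = (+) a ` int ` {0..<N}"
    by (simp add: image_image atLeast0LessThan)
  also have "\<dots> = {a..a + int N - 1}"
    by (auto simp: image_int_atLeastLessThan)
  finally show ?thesis .
qed

lemma distance_antimagic_labeling_unit_step_iff:
  assumes "finite V"
  shows "distance_antimagic_labeling V E f a 1
     \<longleftrightarrow> bij_betw f V {1..card V} \<and> bij_betw (vweight V E f) V {a..a + int (card V) - 1}"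
    (is "?L \<longleftrightarrow> ?bij \<and> bij_betw ?W V ?I")
proof
  assume L: ?L
  have "?W ` V = ?I"
    using vweight_image_of_labeling[OF L assms] by (simp add: image_shifted_lessThan)
  moreover have "card ?I = card V" by simp
  ultimately show "?bij \<and> bij_betw ?W V ?I"
    using L assms by (auto simp: distance_antimagic_labeling_def bij_betw_def
        intro: eq_card_imp_inj_on)
next
  assume B: "?bij \<and> bij_betw ?W V ?I"
  have "image_mset ?W (mset_set V) = mset_set ?I"
    using B by (simp add: image_mset_mset_set bij_betw_def)
  also have "?I = set (map (\<lambda>k. a + int k) [0..<card V])"
    by (simp add: image_shifted_lessThan atLeast0LessThan)
  also have "mset_set \<dots> = image_mset (\<lambda>k. a + int k * 1) (mset [0..<card V])"
    by (subst mset_set_set) (auto simp: distinct_map inj_on_def)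
  finally show ?L using B by (simp add: distance_antimagic_labeling_def)
qed

definition friendship_partner :: "nat \<Rightarrow> nat" where
  "friendship_partner x = (if odd x then x + 1 else x - 1)"

lemma friendship_partner_in_leaves: "x \<in> {1..2*n} \<Longrightarrow> friendship_partner x \<in> {1..2*n}"
  unfolding friendship_partner_def by (auto; presburger)

lemma friendship_partner_partner: "x \<ge> 1 \<Longrightarrow> friendship_partner (friendship_partner x) = x"
  unfolding friendship_partner_def by (cases "odd x") auto

lemma friendship_partner_leaves: "friendship_partner ` {1..2*n} = {1..2*n}"
  using friendship_partner_in_leaves friendship_partner_partner
  by (force intro: image_eqI[where x = "friendship_partner y" for y])

lemma finite_friendship_vertices: "finite (friendship_vertices n)"
  by (simp add: friendship_vertices_def)

lemma card_friendship_vertices: "card (friendship_vertices n) = 2*n + 1"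
  by (simp add: friendship_vertices_def)

lemma friendship_vertices_insert_leaves: "friendship_vertices n = insert 0 {1..2*n}"
  unfolding friendship_vertices_def by auto

lemma friendship_triangle_iff_partner:
  assumes "1 \<le> x" "1 \<le> y"
  shows "(\<exists>i\<in>{1..n}. {x, y} = {2*i - 1, 2*i}) \<longleftrightarrow> x \<le> 2*n \<and> y = friendship_partner x"
proof
  assume "\<exists>i\<in>{1..n}. {x, y} = {2*i - 1, 2*i}"
  then obtain i where "i \<in> {1..n}" "{x, y} = {2*i - 1, 2*i}" by blast
  then show "x \<le> 2*n \<and> y = friendship_partner x"
    by (auto simp: doubleton_eq_iff friendship_partner_def)
next
  assume xy: "x \<le> 2*n \<and> y = friendship_partner x"
  show "\<exists>i\<in>{1..n}. {x, y} = {2*i - 1, 2*i}"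
  proof (cases "odd x")
    case True
    then obtain i where "x = 2*i + 1" by (meson oddE)
    with xy show ?thesis by (intro bexI[of _ "i + 1"]) (auto simp: friendship_partner_def)
  next
    case False
    then obtain i where "x = 2*i" by (meson evenE)
    with xy assms show ?thesis by (intro bexI[of _ i]) (auto simp: friendship_partner_def)
  qed
qed

lemma nbhd_friendship_centre: "nbhd (friendship_vertices n) (friendship_adj n) 0 = {1..2*n}"
  unfolding nbhd_def friendship_vertices_def friendship_adj_def by auto

lemma nbhd_friendship_leaf:
  assumes x: "x \<in> {1..2*n}"
  shows "nbhd (friendship_vertices n) (friendship_adj n) x = {0, friendship_partner x}"
proof -
  have partner: "friendship_partner x \<in> {1..2*n}" "friendship_partner x \<noteq> x"
    using friendship_partner_in_leaves[OF x] by (auto simp: friendship_partner_def)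
  have "y \<in> nbhd (friendship_vertices n) (friendship_adj n) x \<longleftrightarrow> y = 0 \<or> y = friendship_partner x"
    for y
  proof (cases "y = 0")
    case False
    then show ?thesis
      using x partner friendship_triangle_iff_partner[of x y n]
      by (auto simp: nbhd_def friendship_vertices_def friendship_adj_def)
  qed (use x in \<open>simp add: nbhd_def friendship_vertices_def friendship_adj_def\<close>)
  then show ?thesis by auto
qed

lemma vweight_friendship_centre:
  "vweight (friendship_vertices n) (friendship_adj n) f 0 = (\<Sum>y\<in>{1..2*n}. int (f y))"
  by (simp add: vweight_def nbhd_friendship_centre)

lemma vweight_friendship_leaf:
  assumes "x \<in> {1..2*n}"
  shows "vweight (friendship_vertices n) (friendship_adj n) f x = int (f 0) + int (f (friendship_partner x))"
  using friendship_partner_in_leaves[OF assms]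
  by (simp add: vweight_def nbhd_friendship_leaf[OF assms])

lemma vweight_friendship_centre_of_bij:
  assumes f: "bij_betw f (friendship_vertices n) {1..2*n+1}"
  shows "vweight (friendship_vertices n) (friendship_adj n) f 0 = (2*int n + 1) * (int n + 1) - int (f 0)"
proof -
  have "int (f 0) + (\<Sum>y\<in>{1..2*n}. int (f y)) = (\<Sum>y\<in>friendship_vertices n. int (f y))"
    by (simp add: friendship_vertices_insert_leaves)
  also have "\<dots> = (\<Sum>k\<in>{1..2*n+1}. int k)"
    using sum.reindex_bij_betw[OF f, of int] by simp
  also have "\<dots> = (2*int n + 1) * (int n + 1)"
    using double_gauss_sum_from_Suc_0[of "2*n+1", where ?'a = int] by (simp add: algebra_simps)
  finally show ?thesis by (simp add: vweight_friendship_centre)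
qed

lemma vweight_friendship_leaves_of_bij:
  assumes f: "bij_betw f (friendship_vertices n) {1..2*n+1}"
  shows "vweight (friendship_vertices n) (friendship_adj n) f ` {1..2*n}
           = (\<lambda>j. int (f 0) + int j) ` ({1..2*n+1} - {f 0})"
proof -
  have "f ` {1..2*n} = {1..2*n+1} - {f 0}"
    using bij_betw_imp_surj_on[OF f] bij_betw_imp_inj_on[OF f]
    by (simp add: friendship_vertices_insert_leaves) (metis Diff_insert_absorb)
  then have partner_labels: "(\<lambda>x. f (friendship_partner x)) ` {1..2*n} = {1..2*n+1} - {f 0}"
    by (metis image_image friendship_partner_leaves)
  have "vweight (friendship_vertices n) (friendship_adj n) f ` {1..2*n}
          = (\<lambda>x. int (f 0) + int (f (friendship_partner x))) ` {1..2*n}"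
    by (rule image_cong) (simp_all add: vweight_friendship_leaf)
  also have "\<dots> = (\<lambda>j. int (f 0) + int j) ` ((\<lambda>x. f (friendship_partner x)) ` {1..2*n})"
    by (simp add: image_image)
  finally show ?thesis
    unfolding partner_labels .
qed

lemma friendship_consecutive_leaf_weights:
  assumes "n \<ge> 2" and f: "bij_betw f (friendship_vertices n) {1..2*n+1}"
  obtains x y where "x \<in> {1..2*n}" "y \<in> {1..2*n}"
    and "vweight (friendship_vertices n) (friendship_adj n) f x \<le> 2 * int n + 2"
    and "vweight (friendship_vertices n) (friendship_adj n) f y
           = vweight (friendship_vertices n) (friendship_adj n) f x + 1"
proof -
  let ?W = "vweight (friendship_vertices n) (friendship_adj n) f"
  have c: "f 0 \<in> {1..2*n+1}"
    using bij_betw_apply[OF f] by (simp add: friendship_vertices_def)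
  define j where "j = (if f 0 \<ge> 3 then 1 else (3::nat))"
  have j: "j \<in> {1..2*n+1} - {f 0}" "j + 1 \<in> {1..2*n+1} - {f 0}"
    "int (f 0) + int j \<le> 2 * int n + 2"
    using c \<open>n \<ge> 2\<close> by (auto simp: j_def)
  then have x: "int (f 0) + int j \<in> ?W ` {1..2*n}"
    and y: "int (f 0) + int (j + 1) \<in> ?W ` {1..2*n}"
    unfolding vweight_friendship_leaves_of_bij[OF f] by blast+
  obtain x where "x \<in> {1..2*n}" "?W x = int (f 0) + int j"
    using x by (metis imageE)
  moreover obtain y where "y \<in> {1..2*n}" "?W y = int (f 0) + int (j + 1)"
    using y by (metis imageE)
  ultimately show ?thesis
    using j(3) by (intro that[of x y]) simp_all
qed

lemma friendship_no_distance_antimagic_labeling: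
  assumes "n \<ge> 3"
  shows "\<not> distance_antimagic_labeling (friendship_vertices n) (friendship_adj n) f a d"
proof
  let ?V = "friendship_vertices n" and ?W = "vweight (friendship_vertices n) (friendship_adj n) f"
  assume L: "distance_antimagic_labeling ?V (friendship_adj n) f a d"
  have f: "bij_betw f ?V {1..2*n+1}"
    using L by (simp add: distance_antimagic_labeling_def card_friendship_vertices)
  have "n \<ge> 2" using assms by simp
  then obtain x y where xy: "x \<in> {1..2*n}" "y \<in> {1..2*n}"
    and small: "?W x \<le> 2 * int n + 2" and step: "?W y = ?W x + 1"
    using f by (rule friendship_consecutive_leaf_weights)
  have in_V: "0 \<in> ?V" "x \<in> ?V" "y \<in> ?V"
    using xy by (auto simp: friendship_vertices_def)
  have "d = 1"
    using L finite_friendship_vertices in_V(2,3) step by (rule distance_antimagic_labeling_step_eq_1)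
  with L have "bij_betw ?W ?V {a..a + int (card ?V) - 1}"
    using distance_antimagic_labeling_unit_step_iff[OF finite_friendship_vertices] by blast
  then have "?W ` ?V = {a..a + 2 * int n}"
    by (simp add: card_friendship_vertices bij_betw_def)
  then have "?W 0 \<in> {a..a + 2 * int n}" "?W x \<in> {a..a + 2 * int n}"
    using in_V(1,2) by blast+
  then have "?W 0 \<le> ?W x + 2 * int n"
    by simp
  moreover have "?W 0 \<ge> (2 * int n + 1) * int n"
  proof -
    have "int (f 0) \<le> 2 * int n + 1"
      using bij_betw_apply[OF f in_V(1)] by simp
    then show ?thesis
      using vweight_friendship_centre_of_bij[OF f] by (simp add: algebra_simps)
  qed
  moreover have "(2 * int n + 1) * 3 \<le> (2 * int n + 1) * int n"
    using assms by (intro mult_left_mono) auto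
  ultimately show False
    using small by simp
qed

lemma friendship_1_distance_antimagic: "distance_antimagic (friendship_vertices 1) (friendship_adj 1) 3 1"
proof -
  define f :: "nat \<Rightarrow> nat" where "f x = (if x = 0 then 2 else if x = 1 then 1 else 3)" for x
  define W where "W = vweight (friendship_vertices 1) (friendship_adj 1) f"
  have V: "friendship_vertices 1 = {0, 1, 2}"
    by (auto simp: friendship_vertices_def)
  have "W 0 = 4"
    by (simp add: W_def vweight_friendship_centre f_def eval_nat_numeral atLeastAtMostSuc_conv)
  moreover have "W 1 = 5" "W 2 = 3"
    by (simp_all add: W_def vweight_friendship_leaf friendship_partner_def f_def)
  ultimately have "bij_betw f {0, 1, 2} {1..3}" "bij_betw W {0, 1, 2} {3..5}"
    by (auto simp: bij_betw_def f_def)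
  then have "distance_antimagic_labeling (friendship_vertices 1) (friendship_adj 1) f 3 1"
    unfolding distance_antimagic_labeling_unit_step_iff[OF finite_friendship_vertices]
      card_friendship_vertices W_def[symmetric]
    unfolding V by simp
  then show ?thesis
    by (auto simp: distance_antimagic_def)
qed

lemma friendship_2_distance_antimagic: "distance_antimagic (friendship_vertices 2) (friendship_adj 2) 6 1"
proof -
  define f :: "nat \<Rightarrow> nat" where "f x = (if x = 0 then 5 else x)" for x
  define W where "W = vweight (friendship_vertices 2) (friendship_adj 2) f"
  have V: "friendship_vertices 2 = {0, 1, 2, 3, 4}"
    by (auto simp: friendship_vertices_def)
  have "W 0 = 10"
    by (simp add: W_def vweight_friendship_centre f_def eval_nat_numeral atLeastAtMostSuc_conv)
  moreover have "W 1 = 7" "W 2 = 6" "W 3 = 9" "W 4 = 8"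
    by (simp_all add: W_def vweight_friendship_leaf friendship_partner_def f_def)
  ultimately have "bij_betw f {0, 1, 2, 3, 4} {1..5}" "bij_betw W {0, 1, 2, 3, 4} {6..10}"
    by (auto simp: bij_betw_def f_def)
  then have "distance_antimagic_labeling (friendship_vertices 2) (friendship_adj 2) f 6 1"
    unfolding distance_antimagic_labeling_unit_step_iff[OF finite_friendship_vertices]
      card_friendship_vertices W_def[symmetric]
    unfolding V by simp
  then show ?thesis
    by (auto simp: distance_antimagic_def)
qed

theorem mainTheorem15:
  fixes n :: nat
  assumes "n \<ge> 1"
  shows "(\<exists>a d :: int. d \<ge> 0 \<and>
           distance_antimagic (friendship_vertices n) (friendship_adj n) a d)
         \<longleftrightarrow> (n = 1 \<or> n = 2)"
proof
  assume "\<exists>a d :: int. d \<ge> 0 \<and> distance_antimagic (friendship_vertices n) (friendship_adj n) a d"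
  then have "\<not> n \<ge> 3"
    using friendship_no_distance_antimagic_labeling by (auto simp: distance_antimagic_def)
  with assms show "n = 1 \<or> n = 2" by auto
next
  assume "n = 1 \<or> n = 2"
  then show "\<exists>a d :: int. d \<ge> 0 \<and> distance_antimagic (friendship_vertices n) (friendship_adj n) a d"
  proof
    assume "n = 1"
    with friendship_1_distance_antimagic show ?thesis by (intro exI[of _ 3] exI[of _ 1]) simp
  next
    assume "n = 2"
    with friendship_2_distance_antimagic show ?thesis by (intro exI[of _ 6] exI[of _ 1]) simp
  qed
qed

end
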